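(* The elements $x^{\mathbf a_1}-\lambda x^{\mathbf a_0},\dots,x^{\mathbf a_m}-\lambda x^{\mathbf a_0}$ form a regular sequence on $S'$.
   Context: Let $A=\{\mathbf a_1,\dots,\mathbf a_m\}\subseteq\mathbb Z^n$ be linearly independent over $\mathbb R$, $\mathbf a_0\in\mathbb Z^n$, and $\ell_0,\dots,\ell_m$ positive integers with gcd $1$, $\ell_0\mathbf a_0=\sum_{j=1}^m\ell_j\mathbf a_j$, $\ell_0=\sum_{j=1}^m\ell_j$. Let $V$ be the real span of $A$, $V_{\mathbb Z}=V\cap\mathbb Z^n$, $C(A)$ the real cone generated by $A$, $M=V_{\mathbb Z}\cap C(A)$, and $S'$ the $\mathbb C(\lambda)$-subalgebra of $\mathbb C(\lambda)[x_1^{\pm1},\dots,x_n^{\pm1}]$ spanned by $\{x^u:u\in M\}$, $\lambda$ an indeterminate. *)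

theory Defs
  imports "HOL-Analysis.Analysis" "HOL-Library.Poly_Mapping"
    "HOL-Computational_Algebra.Polynomial" "HOL-Computational_Algebra.Fraction_Field"
begin

text \<open>The field C(lambda) of rational functions in an indeterminate lambda.\<close>
type_synonym ratfun = "complex poly fract"

definition lam :: ratfun where "lam = Fract [:0, 1:] 1"

text \<open>Laurent polynomials in x_1..x_n over C(lambda): finitely supported
  functions Z^n -> C(lambda) with convolution product (group algebra of Z^n).\<close>
type_synonym ('n) laurent = "(int ^ 'n::finite) \<Rightarrow>\<^sub>0 ratfun"

definition monomial_x :: "int ^ 'n \<Rightarrow> 'n laurent"  ("x\<^bsup>_\<^esup>")
  where "monomial_x u = Poly_Mapping.single u 1"

definition const_l :: "ratfun \<Rightarrow> ('n::finite) laurent"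
  where "const_l c = Poly_Mapping.single 0 c"

definition rvec :: "int ^ 'n \<Rightarrow> real ^ 'n"
  where "rvec v = (\<chi> i. real_of_int (v $ i))"

definition real_cone :: "(nat \<Rightarrow> int ^ 'n) \<Rightarrow> nat \<Rightarrow> (real ^ 'n) set"
  where "real_cone a m = {\<Sum>j=1..m. c j *\<^sub>R rvec (a j) | c. \<forall>j. 0 \<le> c j}"

definition VZ :: "(nat \<Rightarrow> int ^ 'n) \<Rightarrow> nat \<Rightarrow> (int ^ 'n) set"
  where "VZ a m = {v. rvec v \<in> span (rvec ` a ` {1..m})}"

definition Mset :: "(nat \<Rightarrow> int ^ 'n) \<Rightarrow> nat \<Rightarrow> (int ^ 'n) set"
  where "Mset a m = {v. v \<in> VZ a m \<and> rvec v \<in> real_cone a m}"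

text \<open>S' = C(lambda)-span of the monomials x^u, u \<in> M, i.e. the Laurent
  polynomials supported in M.\<close>
definition Sprime :: "(nat \<Rightarrow> int ^ 'n) \<Rightarrow> nat \<Rightarrow> 'n laurent set"
  where "Sprime a m = {p. Poly_Mapping.keys p \<subseteq> Mset a m}"

definition ideal_in :: "'a::comm_ring_1 set \<Rightarrow> 'a list \<Rightarrow> 'a set"
  where "ideal_in R fs = {\<Sum>i<length fs. g i * fs ! i | g. \<forall>i. g i \<in> R}"

definition regular_seq_on :: "'a::comm_ring_1 set \<Rightarrow> 'a list \<Rightarrow> bool"
  where "regular_seq_on R fs \<longleftrightarrow>
     set fs \<subseteq> R \<and>
     (\<forall>i<length fs. \<forall>g\<in>R. g * fs ! i \<in> ideal_in R (take i fs) \<longrightarrow> g \<in> ideal_in R (take i fs)) \<and>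
     1 \<notin> ideal_in R fs"

end

(*
  Write f_j = x^a_j - lambda x^a_0 and grade the lattice points of the cone by the sum of their
  coordinates with respect to a_1, ..., a_m. Since l_0 = l_1 + ... + l_m, the point a_0 has
  degree 1, so every f_j is homogeneous of degree 1. Each u in M is uniquely r + sum alpha_j a_j
  with r a lattice point of the half-open parallelepiped spanned by a_1, ..., a_m and alpha in N^m.
  The elements x^r f^alpha form a C(lambda)-basis of S': modulo lambda they reduce to the distinct
  monomials x^(r + sum alpha_j a_j), which gives linear independence once the largest common power
  of lambda is divided out of a relation, and in each degree there are exactly as many of them as
  monomials, which gives spanning. Hence (f_1, ..., f_i) is spanned by the basis elements with
  alpha_j > 0 for some j <= i. Multiplication by f_(i+1) maps basis elements injectively to basis
  elements by raising alpha_(i+1), and basis elements outside that span stay outside, so f_(i+1) is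
  a nonzerodivisor modulo (f_1, ..., f_i); finally 1 = x^0 f^0 is not in (f_1, ..., f_m).
*)

theory Submission
  imports Defs
begin

section \<open>Rational functions regular at 0\<close>

definition regular_at_0 :: "'a::field poly fract set" where
  "regular_at_0 = {Fract p s | p s. poly s 0 \<noteq> 0}"

definition vanishing_at_0 :: "'a::field poly fract set" where
  "vanishing_at_0 = {Fract p s | p s. poly s 0 \<noteq> 0 \<and> poly p 0 = 0}"

lemma regular_at_0I: "poly s 0 \<noteq> 0 \<Longrightarrow> Fract p s \<in> regular_at_0"
  unfolding regular_at_0_def by blast

lemma regular_at_0E:
  assumes "x \<in> regular_at_0"
  obtains p s where "poly s 0 \<noteq> 0" "s \<noteq> 0" "x = Fract p s"
  using assms unfolding regular_at_0_def by force

lemma vanishing_at_0I: "poly s 0 \<noteq> 0 \<Longrightarrow> poly p 0 = 0 \<Longrightarrow> Fract p s \<in> vanishing_at_0"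
  unfolding vanishing_at_0_def by blast

lemma vanishing_at_0E:
  assumes "x \<in> vanishing_at_0"
  obtains p s where "poly s 0 \<noteq> 0" "s \<noteq> 0" "poly p 0 = 0" "x = Fract p s"
  using assms unfolding vanishing_at_0_def by force

lemma vanishing_at_0_FractD:
  assumes "Fract p s \<in> vanishing_at_0" "poly s 0 \<noteq> 0"
  shows "poly p 0 = 0"
proof -
  obtain p' s' where p': "poly s' 0 \<noteq> 0" "s' \<noteq> 0" "poly p' 0 = 0" "Fract p s = Fract p' s'"
    using assms(1) by (rule vanishing_at_0E)
  have "s \<noteq> 0"
    using assms(2) by auto
  then have "p * s' = p' * s"
    using p' by (simp add: eq_fract)
  then have "poly p 0 * poly s' 0 = 0"
    using p'(3) by (metis mult_zero_left poly_mult)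
  then show ?thesis
    using p'(1) by simp
qed

lemma regular_at_0_add: "x \<in> regular_at_0 \<Longrightarrow> y \<in> regular_at_0 \<Longrightarrow> x + y \<in> regular_at_0"
  by (elim regular_at_0E) (simp add: regular_at_0I)

lemma regular_at_0_mult: "x \<in> regular_at_0 \<Longrightarrow> y \<in> regular_at_0 \<Longrightarrow> x * y \<in> regular_at_0"
  by (elim regular_at_0E) (simp add: regular_at_0I)

lemma regular_at_0_uminus: "x \<in> regular_at_0 \<Longrightarrow> - x \<in> regular_at_0"
  by (elim regular_at_0E) (simp add: regular_at_0I)

lemma Fract_poly_regular_at_0: "Fract p 1 \<in> regular_at_0"
  by (simp add: regular_at_0I)

lemma zero_regular_at_0: "0 \<in> regular_at_0"
  and one_regular_at_0: "1 \<in> regular_at_0"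
  by (simp_all add: fract_expand Fract_poly_regular_at_0)

lemma vanishing_at_0_add: "x \<in> vanishing_at_0 \<Longrightarrow> y \<in> vanishing_at_0 \<Longrightarrow> x + y \<in> vanishing_at_0"
  by (elim vanishing_at_0E) (simp add: vanishing_at_0I)

lemma vanishing_at_0_uminus: "x \<in> vanishing_at_0 \<Longrightarrow> - x \<in> vanishing_at_0"
  by (elim vanishing_at_0E) (simp add: vanishing_at_0I)

lemma vanishing_at_0_mult:
  "x \<in> regular_at_0 \<Longrightarrow> y \<in> vanishing_at_0 \<Longrightarrow> x * y \<in> vanishing_at_0"
  by (elim regular_at_0E vanishing_at_0E) (simp add: vanishing_at_0I)

lemma zero_vanishing_at_0: "0 \<in> vanishing_at_0"
  by (simp add: fract_expand vanishing_at_0I)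

lemma vanishing_subset_regular_at_0: "vanishing_at_0 \<subseteq> regular_at_0"
  by (auto simp: regular_at_0_def vanishing_at_0_def)

lemma X_vanishing_at_0: "Fract [:0, 1:] 1 \<in> vanishing_at_0"
  by (simp add: vanishing_at_0I)

lemma Fract_X_power: "Fract [:0, 1:] 1 ^ n = Fract ([:0, 1:] ^ n) (1 :: 'a::field poly)"
  by (induction n) (simp_all add: fract_expand)

lemma fract_eq_X_powi_times_unit:
  fixes q :: "'a::field poly fract"
  assumes "q \<noteq> 0"
  obtains k u where "u \<in> regular_at_0" "u \<notin> vanishing_at_0" "q = Fract [:0, 1:] 1 powi k * u"
proof -
  obtain p s where q: "q = Fract p s" "s \<noteq> 0" "p \<noteq> 0"
    using assms by (cases q rule: Fract_cases_nonzero) auto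
  obtain p' where p': "p = [:0, 1:] ^ order 0 p * p'" "\<not> [:0, 1:] dvd p'"
    using order_decomp[OF q(3), of 0] by auto
  obtain s' where s': "s = [:0, 1:] ^ order 0 s * s'" "\<not> [:0, 1:] dvd s'"
    using order_decomp[OF q(2), of 0] by auto
  have "poly p' 0 \<noteq> 0" "poly s' 0 \<noteq> 0"
    using p'(2) s'(2) by (auto simp: poly_eq_0_iff_dvd)
  then have unit: "Fract p' s' \<in> regular_at_0" "Fract p' s' \<notin> vanishing_at_0"
    using vanishing_at_0_FractD by (auto intro: regular_at_0I)
  have X: "Fract [:0, 1:] 1 \<noteq> (0 :: 'a poly fract)"
    by (simp add: fract_expand eq_fract)
  have "q = Fract ([:0, 1:] ^ order 0 p * p') ([:0, 1:] ^ order 0 s * s')"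
    using q(1) p'(1) s'(1) by metis
  also have "\<dots> = Fract ([:0, 1:] ^ order 0 p) 1 * Fract p' s' / Fract ([:0, 1:] ^ order 0 s) 1"
    by (simp add: ac_simps)
  also have "\<dots> = Fract [:0, 1:] 1 powi (int (order 0 p) - int (order 0 s)) * Fract p' s'"
    using X by (simp add: power_int_diff Fract_X_power mult.commute)
  finally show thesis
    using unit that by blast
qed

lemma X_powi_regular_at_0: "0 \<le> k \<Longrightarrow> Fract [:0, 1:] 1 powi k \<in> (regular_at_0 :: 'a::field poly fract set)"
  by (metis Fract_X_power Fract_poly_regular_at_0 nonneg_int_cases power_int_of_nat)

lemma rescale_to_regular_with_unit:
  fixes c :: "'b \<Rightarrow> 'a::field poly fract"
  assumes "finite G" "\<exists>q\<in>G. c q \<noteq> 0"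
  obtains s q0 where "\<And>q. q \<in> G \<Longrightarrow> s * c q \<in> regular_at_0"
    and "q0 \<in> G" "s * c q0 \<notin> vanishing_at_0"
proof -
  define X :: "'a poly fract" where "X = Fract [:0, 1:] 1"
  define G' where "G' = {q \<in> G. c q \<noteq> 0}"
  have "\<forall>q\<in>G'. \<exists>k u. u \<in> regular_at_0 \<and> u \<notin> vanishing_at_0 \<and> c q = X powi k * u"
    unfolding G'_def X_def by (metis (mono_tags, lifting) fract_eq_X_powi_times_unit mem_Collect_eq)
  then obtain k u where ku: "\<And>q. q \<in> G' \<Longrightarrow>
      u q \<in> regular_at_0 \<and> u q \<notin> vanishing_at_0 \<and> c q = X powi k q * u q"
    by metis
  define t where "t = Min (k ` G')"
  have G': "finite G'" "G' \<noteq> {}"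
    using assms by (auto simp: G'_def)
  then have "t \<in> k ` G'"
    unfolding t_def by (intro Min_in) simp_all
  then obtain q0 where q0: "q0 \<in> G'" "k q0 = t"
    by blast
  have X: "X \<noteq> 0"
    by (simp add: X_def fract_expand eq_fract)
  have scaled: "X powi (- t) * c q = X powi (k q - t) * u q" if "q \<in> G'" for q
    using ku[OF that] X by (simp add: power_int_add[symmetric] mult.assoc)
  show thesis
  proof
    show "X powi (- t) * c q \<in> regular_at_0" if "q \<in> G" for q
    proof (cases "q \<in> G'")
      case True
      then have "0 \<le> k q - t"
        using G'(1) by (simp add: t_def)
      then have "X powi (k q - t) \<in> regular_at_0"
        unfolding X_def by (rule X_powi_regular_at_0)
      then show ?thesis
        unfolding scaled[OF True] using ku[OF True] by (simp add: regular_at_0_mult)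
    next
      case False
      then show ?thesis
        using that zero_regular_at_0 by (simp add: G'_def)
    qed
    show "q0 \<in> G"
      using q0(1) by (simp add: G'_def)
    have "X powi (- t) * c q0 = u q0"
      using scaled[OF q0(1)] q0(2) by simp
    then show "X powi (- t) * c q0 \<notin> vanishing_at_0"
      using ku[OF q0(1)] by metis
  qed
qed

section \<open>Coefficientwise congruence modulo the indeterminate\<close>

lemma sum_closed:
  assumes "0 \<in> C" "\<And>x y. x \<in> C \<Longrightarrow> y \<in> C \<Longrightarrow> x + y \<in> C" "\<And>i. i \<in> F \<Longrightarrow> f i \<in> C"
  shows "sum f F \<in> C"
  using assms(3) by (induction F rule: infinite_finite_induct) (simp_all add: assms(1,2))

lemma poly_mapping_sum_single_keys:
  "p = (\<Sum>u\<in>Poly_Mapping.keys p. Poly_Mapping.single u (Poly_Mapping.lookup p u))"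
  by (rule poly_mapping_eqI) (simp add: lookup_sum lookup_single when_def in_keys_iff)

lemma lookup_sum_single_inj:
  assumes "finite G" "inj_on e G" "q \<in> G"
  shows "Poly_Mapping.lookup (\<Sum>p\<in>G. Poly_Mapping.single (e p) (f p)) (e q) = f q"
proof -
  have "Poly_Mapping.lookup (\<Sum>p\<in>G. Poly_Mapping.single (e p) (f p)) (e q) =
      (\<Sum>p\<in>G. if p = q then f p else 0)"
    unfolding lookup_sum lookup_single when_def
    using assms(2,3) by (intro sum.cong refl) (auto dest: inj_onD)
  then show ?thesis
    using assms(1,3) by simp
qed

definition coeffs_in :: "'b set \<Rightarrow> ('a \<Rightarrow>\<^sub>0 'b::zero) set" where
  "coeffs_in A = {p. \<forall>w. Poly_Mapping.lookup p w \<in> A}"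

lemma coeffs_in_single: "0 \<in> A \<Longrightarrow> c \<in> A \<Longrightarrow> Poly_Mapping.single u c \<in> coeffs_in A"
  by (simp add: coeffs_in_def lookup_single when_def)

lemma coeffs_in_mono: "A \<subseteq> B \<Longrightarrow> coeffs_in A \<subseteq> coeffs_in B"
  by (auto simp: coeffs_in_def)

lemma coeffs_in_add:
  assumes "\<And>x y. x \<in> A \<Longrightarrow> y \<in> A \<Longrightarrow> x + y \<in> A"
  shows "p \<in> coeffs_in A \<Longrightarrow> q \<in> coeffs_in A \<Longrightarrow> p + q \<in> coeffs_in A"
  using assms by (simp add: coeffs_in_def lookup_add)

lemma coeffs_in_diff:
  fixes p q :: "'a \<Rightarrow>\<^sub>0 'b::ab_group_add"
  assumes "\<And>x y. x \<in> A \<Longrightarrow> y \<in> A \<Longrightarrow> x + y \<in> A" "\<And>x. x \<in> A \<Longrightarrow> - x \<in> A"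
    and "p \<in> coeffs_in A" "q \<in> coeffs_in A"
  shows "p - q \<in> coeffs_in A"
proof -
  have "Poly_Mapping.lookup p w + - Poly_Mapping.lookup q w \<in> A" for w
    using assms(3,4) by (intro assms(1,2)) (simp_all add: coeffs_in_def)
  then show ?thesis
    by (simp add: coeffs_in_def lookup_minus)
qed

lemma coeffs_in_sum:
  assumes "0 \<in> A" "\<And>x y. x \<in> A \<Longrightarrow> y \<in> A \<Longrightarrow> x + y \<in> A"
    and "\<And>i. i \<in> F \<Longrightarrow> f i \<in> coeffs_in A"
  shows "sum f F \<in> coeffs_in A"
  using assms by (simp add: coeffs_in_def lookup_sum sum_closed)

lemma coeffs_in_mult:
  fixes p q :: "'a::comm_monoid_add \<Rightarrow>\<^sub>0 'b::comm_semiring_1"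
  assumes C: "0 \<in> C" "\<And>x y. x \<in> C \<Longrightarrow> y \<in> C \<Longrightarrow> x + y \<in> C"
    and ABC: "\<And>x y. x \<in> A \<Longrightarrow> y \<in> B \<Longrightarrow> x * y \<in> C"
    and p: "p \<in> coeffs_in A" and q: "q \<in> coeffs_in B"
  shows "p * q \<in> coeffs_in C"
proof -
  have "p * q = (\<Sum>u\<in>Poly_Mapping.keys p. \<Sum>v\<in>Poly_Mapping.keys q.
      Poly_Mapping.single (u + v) (Poly_Mapping.lookup p u * Poly_Mapping.lookup q v))"
    by (subst (1 2) poly_mapping_sum_single_keys)
      (simp add: sum_distrib_left sum_distrib_right mult_single, rule sum.swap)
  then have "Poly_Mapping.lookup (p * q) w = (\<Sum>u\<in>Poly_Mapping.keys p. \<Sum>v\<in>Poly_Mapping.keys q.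
      if u + v = w then Poly_Mapping.lookup p u * Poly_Mapping.lookup q v else 0)" for w
    by (simp add: lookup_sum lookup_single when_def)
  moreover have "\<dots> w \<in> C" for w
    using p q by (intro sum_closed[OF C]) (auto simp: coeffs_in_def C ABC)
  ultimately show ?thesis
    by (simp add: coeffs_in_def)
qed

lemma coeffs_in_regular_at_0_mult:
  fixes p q :: "'a::comm_monoid_add \<Rightarrow>\<^sub>0 'b::field poly fract"
  shows "p \<in> coeffs_in regular_at_0 \<Longrightarrow> q \<in> coeffs_in regular_at_0 \<Longrightarrow>
    p * q \<in> coeffs_in regular_at_0"
  by (rule coeffs_in_mult[of regular_at_0 regular_at_0 regular_at_0])
    (simp_all add: zero_regular_at_0 regular_at_0_add regular_at_0_mult)

lemma coeffs_in_vanishing_at_0_mult: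
  fixes p q :: "'a::comm_monoid_add \<Rightarrow>\<^sub>0 'b::field poly fract"
  shows "p \<in> coeffs_in regular_at_0 \<Longrightarrow> q \<in> coeffs_in vanishing_at_0 \<Longrightarrow>
    p * q \<in> coeffs_in vanishing_at_0"
  by (rule coeffs_in_mult[of vanishing_at_0 regular_at_0 vanishing_at_0])
    (simp_all add: zero_vanishing_at_0 vanishing_at_0_add vanishing_at_0_mult)

definition cong_mod_X :: "('a \<Rightarrow>\<^sub>0 'b::field poly fract) \<Rightarrow> ('a \<Rightarrow>\<^sub>0 'b poly fract) \<Rightarrow> bool" where
  "cong_mod_X p q \<longleftrightarrow> p \<in> coeffs_in regular_at_0 \<and> q \<in> coeffs_in regular_at_0 \<and>
     p - q \<in> coeffs_in vanishing_at_0"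

lemma cong_mod_X_refl: "p \<in> coeffs_in regular_at_0 \<Longrightarrow> cong_mod_X p p"
  by (simp add: cong_mod_X_def coeffs_in_def zero_vanishing_at_0)

lemma cong_mod_X_diff_vanishing:
  assumes "p \<in> coeffs_in regular_at_0" "q \<in> coeffs_in vanishing_at_0"
  shows "cong_mod_X (p - q) p"
proof -
  have "q \<in> coeffs_in regular_at_0"
    using assms(2) coeffs_in_mono[OF vanishing_subset_regular_at_0] by blast
  then have "p - q \<in> coeffs_in regular_at_0"
    using assms(1) by (intro coeffs_in_diff) (simp_all add: regular_at_0_add regular_at_0_uminus)
  moreover have "p - q - p \<in> coeffs_in vanishing_at_0"
    using assms(2) by (simp add: coeffs_in_def vanishing_at_0_uminus)
  ultimately show ?thesis
    using assms(1) by (simp add: cong_mod_X_def)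
qed

lemma cong_mod_X_mult:
  fixes p p' q q' :: "'a::comm_monoid_add \<Rightarrow>\<^sub>0 'b::field poly fract"
  assumes p: "cong_mod_X p p'" and q: "cong_mod_X q q'"
  shows "cong_mod_X (p * q) (p' * q')"
proof -
  have "p * (q - q') \<in> coeffs_in vanishing_at_0"
    using p q unfolding cong_mod_X_def by (simp add: coeffs_in_vanishing_at_0_mult)
  moreover have "(p - p') * q' \<in> coeffs_in vanishing_at_0"
    using p q unfolding cong_mod_X_def by (simp add: coeffs_in_vanishing_at_0_mult mult.commute)
  moreover have "p * q - p' * q' = p * (q - q') + (p - p') * q'"
    by (simp add: algebra_simps)
  ultimately have "p * q - p' * q' \<in> coeffs_in vanishing_at_0"
    using coeffs_in_add[OF vanishing_at_0_add] by simp
  moreover have "p * q \<in> coeffs_in regular_at_0" "p' * q' \<in> coeffs_in regular_at_0"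
    using p q unfolding cong_mod_X_def by (simp_all add: coeffs_in_regular_at_0_mult)
  ultimately show ?thesis
    by (simp add: cong_mod_X_def)
qed

lemma one_coeffs_in_regular_at_0: "1 \<in> coeffs_in regular_at_0"
  using coeffs_in_single[OF zero_regular_at_0 one_regular_at_0, of 0] by simp

lemma cong_mod_X_prod:
  fixes f g :: "'i \<Rightarrow> 'a::comm_monoid_add \<Rightarrow>\<^sub>0 'b::field poly fract"
  shows "(\<And>i. i \<in> F \<Longrightarrow> cong_mod_X (f i) (g i)) \<Longrightarrow> cong_mod_X (prod f F) (prod g F)"
  by (induction F rule: infinite_finite_induct)
    (simp_all add: cong_mod_X_refl one_coeffs_in_regular_at_0 cong_mod_X_mult)

lemma cong_mod_X_power:
  fixes p q :: "'a::comm_monoid_add \<Rightarrow>\<^sub>0 'b::field poly fract"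
  shows "cong_mod_X p q \<Longrightarrow> cong_mod_X (p ^ n) (q ^ n)"
  using cong_mod_X_prod[of "{..<n}" "\<lambda>_. p" "\<lambda>_. q"] by simp

lemma cong_mod_X_sum:
  fixes f g :: "'i \<Rightarrow> 'a \<Rightarrow>\<^sub>0 'b::field poly fract"
  assumes "\<And>i. i \<in> F \<Longrightarrow> cong_mod_X (f i) (g i)"
  shows "cong_mod_X (sum f F) (sum g F)"
proof -
  note regular = coeffs_in_sum[OF zero_regular_at_0 regular_at_0_add]
  have "sum f F - sum g F = (\<Sum>i\<in>F. f i - g i)"
    by (simp add: sum_subtractf)
  also have "\<dots> \<in> coeffs_in vanishing_at_0"
    using assms unfolding cong_mod_X_def
    by (intro coeffs_in_sum) (simp_all add: zero_vanishing_at_0 vanishing_at_0_add)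
  finally show ?thesis
    using assms by (auto simp: cong_mod_X_def intro!: regular)
qed

section \<open>Coordinates of lattice points in the cone\<close>

lemma rvec_add: "rvec (u + v) = rvec u + rvec v"
  by (simp add: rvec_def vec_eq_iff)

lemma rvec_diff: "rvec (u - v) = rvec u - rvec v"
  by (simp add: rvec_def vec_eq_iff)

lemma rvec_scale: "rvec (k *s u) = real_of_int k *\<^sub>R rvec u"
  by (simp add: rvec_def vec_eq_iff)

lemma rvec_zero: "rvec 0 = 0"
  by (simp add: rvec_def vec_eq_iff)

lemma rvec_sum: "rvec (sum f F) = (\<Sum>x\<in>F. rvec (f x))"
  by (induction F rule: infinite_finite_induct) (simp_all add: rvec_add vec_eq_iff rvec_def)

lemma finite_bounded_int_vectors: "finite {v :: int ^ 'n::finite. \<forall>i. \<bar>v $ i\<bar> \<le> N}"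
proof -
  have "{v :: int ^ 'n. \<forall>i. \<bar>v $ i\<bar> \<le> N} \<subseteq> vec_lambda ` (PiE UNIV (\<lambda>_. {-N..N}))"
  proof
    fix v :: "int ^ 'n"
    assume "v \<in> {v. \<forall>i. \<bar>v $ i\<bar> \<le> N}"
    then have "(\<lambda>i. v $ i) \<in> PiE UNIV (\<lambda>_. {-N..N})"
      by (auto simp: abs_le_iff minus_le_iff)
    then show "v \<in> vec_lambda ` (PiE UNIV (\<lambda>_. {-N..N}))"
      by (metis vec_lambda_eta image_eqI)
  qed
  then show ?thesis
    by (rule finite_subset) (simp add: finite_PiE)
qed

locale lattice_cone =
  fixes a :: "nat \<Rightarrow> int ^ 'n::finite" and m :: nat
  assumes independent_generators: "independent (rvec ` a ` {1..m})"
    and inj_generators: "inj_on (\<lambda>j. rvec (a j)) {1..m}"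
begin

abbreviation "generators \<equiv> rvec ` a ` {1..m}"

definition coord :: "real ^ 'n \<Rightarrow> nat \<Rightarrow> real" where
  "coord x j = representation generators x (rvec (a j))"

lemma generator_in_span: "rvec (a j) \<in> span generators" if "j \<in> {1..m}"
  using that by (intro span_base) auto

lemma lincomb_in_span: "(\<Sum>j=1..m. c j *\<^sub>R rvec (a j)) \<in> span generators"
  by (intro span_sum span_scale generator_in_span)

lemma coord_add:
  assumes "x \<in> span generators" "y \<in> span generators"
  shows "coord (x + y) j = coord x j + coord y j"
  using representation_add[OF independent_generators assms(2,1)] by (simp add: coord_def)

lemma coord_diff:
  assumes "x \<in> span generators" "y \<in> span generators"
  shows "coord (x - y) j = coord x j - coord y j"
  using representation_diff[OF independent_generators assms(2,1)] by (simp add: coord_def)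

lemma coord_zero: "coord 0 j = 0"
  by (simp add: coord_def representation_zero)

lemma coord_generator:
  assumes "i \<in> {1..m}" "j \<in> {1..m}"
  shows "coord (rvec (a i)) j = (if j = i then 1 else 0)"
  using representation_basis[OF independent_generators, of "rvec (a i)"] assms
    inj_on_eq_iff[OF inj_generators assms(2,1)]
  by (simp add: coord_def)

lemma coord_lincomb:
  assumes "j \<in> {1..m}"
  shows "coord (\<Sum>i=1..m. c i *\<^sub>R rvec (a i)) j = c j"
proof -
  have "\<And>i. i \<in> {1..m} \<Longrightarrow> c i *\<^sub>R rvec (a i) \<in> span generators"
    by (intro span_scale generator_in_span)
  then have "coord (\<Sum>i=1..m. c i *\<^sub>R rvec (a i)) j =
      (\<Sum>i=1..m. representation generators (c i *\<^sub>R rvec (a i)) (rvec (a j)))"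
    unfolding coord_def by (subst representation_sum[OF independent_generators]) simp_all
  also have "\<dots> = (\<Sum>i=1..m. if i = j then c i else 0)"
  proof (intro sum.cong refl)
    fix i
    assume i: "i \<in> {1..m}"
    show "representation generators (c i *\<^sub>R rvec (a i)) (rvec (a j)) = (if i = j then c i else 0)"
      using representation_scale[OF independent_generators generator_in_span[OF i]]
        coord_generator[OF i assms]
      by (auto simp: coord_def)
  qed
  finally show ?thesis
    using assms by simp
qed

lemma span_eq_coord_sum:
  assumes "x \<in> span generators"
  shows "x = (\<Sum>j=1..m. coord x j *\<^sub>R rvec (a j))"
proof -
  have "x = (\<Sum>b\<in>generators. representation generators x b *\<^sub>R b)"
    using assms independent_generators by (simp add: sum_representation_eq)
  also have "\<dots> = (\<Sum>j=1..m. coord x j *\<^sub>R rvec (a j))"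
    using inj_generators by (simp add: sum.reindex image_image coord_def)
  finally show ?thesis .
qed

lemma Mset_iff: "u \<in> Mset a m \<longleftrightarrow> rvec u \<in> span generators \<and> (\<forall>j\<in>{1..m}. 0 \<le> coord (rvec u) j)"
proof
  assume "u \<in> Mset a m"
  then obtain c where c: "rvec u = (\<Sum>j=1..m. c j *\<^sub>R rvec (a j))" "\<forall>j. 0 \<le> c j"
    and span: "rvec u \<in> span generators"
    by (auto simp: Mset_def real_cone_def VZ_def)
  then show "rvec u \<in> span generators \<and> (\<forall>j\<in>{1..m}. 0 \<le> coord (rvec u) j)"
    using coord_lincomb[of _ c] by simp
next
  assume u: "rvec u \<in> span generators \<and> (\<forall>j\<in>{1..m}. 0 \<le> coord (rvec u) j)"
  define c where "c j = (if j \<in> {1..m} then coord (rvec u) j else 0)" for j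
  have "rvec u = (\<Sum>j=1..m. c j *\<^sub>R rvec (a j))"
    using span_eq_coord_sum u by (simp add: c_def)
  moreover have "\<forall>j. 0 \<le> c j"
    using u by (simp add: c_def)
  ultimately show "u \<in> Mset a m"
    using u by (auto simp: Mset_def real_cone_def VZ_def)
qed

definition deg :: "int ^ 'n \<Rightarrow> real" where
  "deg u = (\<Sum>j=1..m. coord (rvec u) j)"

lemma Mset_add: "u \<in> Mset a m \<Longrightarrow> v \<in> Mset a m \<Longrightarrow> u + v \<in> Mset a m"
  by (simp add: Mset_iff rvec_add coord_add span_add)

lemma deg_add: "u \<in> Mset a m \<Longrightarrow> v \<in> Mset a m \<Longrightarrow> deg (u + v) = deg u + deg v"
  by (simp add: Mset_iff deg_def rvec_add coord_add sum.distrib)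

lemma zero_in_Mset: "0 \<in> Mset a m" and deg_zero: "deg 0 = 0"
  by (simp_all add: Mset_iff deg_def rvec_zero coord_zero span_zero)

lemma generator_in_Mset: "j \<in> {1..m} \<Longrightarrow> a j \<in> Mset a m"
  and deg_generator: "j \<in> {1..m} \<Longrightarrow> deg (a j) = 1"
  using generator_in_span by (simp_all add: Mset_iff deg_def coord_generator)

lemma finite_Mset_deg: "finite {u \<in> Mset a m. deg u = d}"
proof -
  define K where "K = (\<Sum>j=1..m. norm (rvec (a j)))"
  have "\<bar>u $ i\<bar> \<le> \<lceil>d * K\<rceil>" if u: "u \<in> Mset a m" "deg u = d" for u i
  proof -
    have coord: "rvec u \<in> span generators" "\<And>j. j \<in> {1..m} \<Longrightarrow> 0 \<le> coord (rvec u) j"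
      using u(1) by (simp_all add: Mset_iff)
    have "\<bar>rvec u $ i\<bar> \<le> norm (rvec u)"
      by (rule component_le_norm_cart)
    also have "\<dots> = norm (\<Sum>j=1..m. coord (rvec u) j *\<^sub>R rvec (a j))"
      by (rule arg_cong[where f = norm], rule span_eq_coord_sum[OF coord(1)])
    also have "\<dots> \<le> (\<Sum>j=1..m. norm (coord (rvec u) j *\<^sub>R rvec (a j)))"
      by (rule norm_sum)
    also have "\<dots> = (\<Sum>j=1..m. coord (rvec u) j * norm (rvec (a j)))"
      using coord(2) by (intro sum.cong) auto
    also have "\<dots> \<le> (\<Sum>j=1..m. coord (rvec u) j * K)"
      unfolding K_def using coord(2)
      by (intro sum_mono mult_left_mono member_le_sum) auto
    also have "\<dots> = d * K"
      unfolding sum_distrib_right[symmetric] using u(2) by (simp add: deg_def)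
    finally show ?thesis
      by (simp add: rvec_def) linarith
  qed
  then have "{u \<in> Mset a m. deg u = d} \<subseteq> {v. \<forall>i. \<bar>v $ i\<bar> \<le> \<lceil>d * K\<rceil>}"
    by blast
  then show ?thesis
    using finite_bounded_int_vectors finite_subset by blast
qed

lemma weighted_apex_in_Mset:
  fixes l :: "nat \<Rightarrow> nat"
  assumes l0: "0 < l 0" and rel: "of_nat (l 0) *s a 0 = (\<Sum>j=1..m. of_nat (l j) *s a j)"
  shows "a 0 \<in> Mset a m" and "deg (a 0) = (\<Sum>j=1..m. real (l j)) / real (l 0)"
proof -
  have weighted: "real (l 0) *\<^sub>R rvec (a 0) = (\<Sum>j=1..m. real (l j) *\<^sub>R rvec (a j))"
    using arg_cong[OF rel, of rvec] by (simp add: rvec_scale rvec_sum)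
  have "rvec (a 0) = (1 / real (l 0)) *\<^sub>R (real (l 0) *\<^sub>R rvec (a 0))"
    using l0 by simp
  also have "\<dots> = (\<Sum>j=1..m. (real (l j) / real (l 0)) *\<^sub>R rvec (a j))"
    unfolding weighted by (simp add: scaleR_sum_right)
  finally have "rvec (a 0) = (\<Sum>j=1..m. (real (l j) / real (l 0)) *\<^sub>R rvec (a j))" .
  then have "rvec (a 0) \<in> span generators" "j \<in> {1..m} \<Longrightarrow> coord (rvec (a 0)) j = real (l j) / real (l 0)" for j
    using lincomb_in_span coord_lincomb by simp_all
  then show "a 0 \<in> Mset a m" "deg (a 0) = (\<Sum>j=1..m. real (l j)) / real (l 0)"
    by (simp_all add: Mset_iff deg_def sum_divide_distrib)
qed

definition parallelepiped :: "(int ^ 'n) set" where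
  "parallelepiped = {r. rvec r \<in> span generators \<and> (\<forall>j\<in>{1..m}. coord (rvec r) j \<in> {0..<1})}"

definition basis_index :: "((int ^ 'n) \<times> (nat \<Rightarrow> nat)) set" where
  "basis_index = {(r, \<alpha>). r \<in> parallelepiped \<and> (\<forall>j. j \<notin> {1..m} \<longrightarrow> \<alpha> j = 0)}"

definition exponent :: "(int ^ 'n) \<times> (nat \<Rightarrow> nat) \<Rightarrow> int ^ 'n" where
  "exponent q = fst q + (\<Sum>j=1..m. int (snd q j) *s a j)"

definition coord_floor :: "int ^ 'n \<Rightarrow> nat \<Rightarrow> nat" where
  "coord_floor u j = (if j \<in> {1..m} then nat \<lfloor>coord (rvec u) j\<rfloor> else 0)"

definition index_of :: "int ^ 'n \<Rightarrow> (int ^ 'n) \<times> (nat \<Rightarrow> nat)" where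
  "index_of u = (u - (\<Sum>j=1..m. int (coord_floor u j) *s a j), coord_floor u)"

lemma rvec_lincomb: "rvec (\<Sum>j=1..m. int (\<alpha> j) *s a j) = (\<Sum>j=1..m. real (\<alpha> j) *\<^sub>R rvec (a j))"
  by (simp add: rvec_sum rvec_scale)

lemma exponent_coord:
  assumes "rvec r \<in> span generators"
  shows "rvec (exponent (r, \<alpha>)) \<in> span generators"
    and "j \<in> {1..m} \<Longrightarrow> coord (rvec (exponent (r, \<alpha>))) j = coord (rvec r) j + real (\<alpha> j)"
proof -
  have rvec_exponent: "rvec (exponent (r, \<alpha>)) = rvec r + (\<Sum>j=1..m. real (\<alpha> j) *\<^sub>R rvec (a j))"
    unfolding exponent_def fst_conv snd_conv rvec_add rvec_lincomb ..
  show "rvec (exponent (r, \<alpha>)) \<in> span generators"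
    unfolding rvec_exponent using assms lincomb_in_span by (rule span_add)
  show "j \<in> {1..m} \<Longrightarrow> coord (rvec (exponent (r, \<alpha>))) j = coord (rvec r) j + real (\<alpha> j)"
    unfolding rvec_exponent using coord_add[OF assms lincomb_in_span] coord_lincomb by simp
qed

lemma exponent_in_Mset: "q \<in> basis_index \<Longrightarrow> exponent q \<in> Mset a m"
  using exponent_coord by (auto simp: Mset_iff basis_index_def parallelepiped_def)

lemma deg_exponent:
  "q \<in> basis_index \<Longrightarrow> deg (exponent q) = deg (fst q) + (\<Sum>j=1..m. real (snd q j))"
  using exponent_coord
  by (auto simp: basis_index_def parallelepiped_def deg_def sum.distrib intro!: sum.cong)

lemma index_of_exponent:
  assumes "q \<in> basis_index"
  shows "index_of (exponent q) = q"
proof -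
  obtain r \<alpha> where q: "q = (r, \<alpha>)" "r \<in> parallelepiped" "\<forall>j. j \<notin> {1..m} \<longrightarrow> \<alpha> j = 0"
    using assms by (auto simp: basis_index_def)
  have "nat \<lfloor>coord (rvec (exponent q)) j\<rfloor> = \<alpha> j" if j: "j \<in> {1..m}" for j
  proof -
    have "coord (rvec r) j \<in> {0..<1}"
      using q(2) that by (simp add: parallelepiped_def)
    then have "\<lfloor>coord (rvec r) j + real (\<alpha> j)\<rfloor> = int (\<alpha> j)"
      by (intro floor_unique) auto
    then show ?thesis
      using exponent_coord(2)[OF _ j, where r = r and \<alpha> = \<alpha>] q(1,2) by (simp add: parallelepiped_def)
  qed
  then have "coord_floor (exponent q) = \<alpha>"
    using q(3) by (auto simp: coord_floor_def)
  then show ?thesis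
    by (simp add: index_of_def q(1) exponent_def)
qed

lemma inj_on_exponent: "inj_on exponent basis_index"
  by (rule inj_on_inverseI[where g = index_of]) (rule index_of_exponent)

lemma exponent_index_of: "exponent (index_of u) = u"
  by (simp add: index_of_def exponent_def)

lemma index_of_in_basis_index:
  assumes "u \<in> Mset a m"
  shows "index_of u \<in> basis_index"
proof -
  define \<alpha> where "\<alpha> = coord_floor u"
  define r where "r = u - (\<Sum>j=1..m. int (\<alpha> j) *s a j)"
  have u: "rvec u \<in> span generators" "\<And>j. j \<in> {1..m} \<Longrightarrow> 0 \<le> coord (rvec u) j"
    using assms by (simp_all add: Mset_iff)
  have rvec_r: "rvec r = rvec u - (\<Sum>j=1..m. real (\<alpha> j) *\<^sub>R rvec (a j))"
    unfolding r_def rvec_diff rvec_lincomb ..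
  have span: "rvec r \<in> span generators"
    unfolding rvec_r using u(1) lincomb_in_span by (rule span_diff)
  have "coord (rvec r) j = frac (coord (rvec u) j)" if "j \<in> {1..m}" for j
    unfolding rvec_r using coord_diff[OF u(1) lincomb_in_span] coord_lincomb u(2) that
    by (simp add: \<alpha>_def coord_floor_def frac_def)
  then have "r \<in> parallelepiped"
    using span by (simp add: parallelepiped_def frac_lt_1)
  then show ?thesis
    by (simp add: index_of_def basis_index_def r_def \<alpha>_def coord_floor_def)
qed

lemma bij_betw_exponent_deg:
  "bij_betw exponent {q \<in> basis_index. deg (exponent q) = d} {u \<in> Mset a m. deg u = d}"
proof -
  have bij: "bij_betw exponent basis_index (Mset a m)"
    by (rule bij_betw_byWitness[where f' = index_of])
      (auto simp: index_of_exponent exponent_index_of exponent_in_Mset index_of_in_basis_index)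
  have "exponent ` {q \<in> basis_index. deg (exponent q) = d} = {u \<in> Mset a m. deg u = d}"
  proof
    show "exponent ` {q \<in> basis_index. deg (exponent q) = d} \<subseteq> {u \<in> Mset a m. deg u = d}"
      using exponent_in_Mset by blast
    show "{u \<in> Mset a m. deg u = d} \<subseteq> exponent ` {q \<in> basis_index. deg (exponent q) = d}"
    proof
      fix u
      assume "u \<in> {u \<in> Mset a m. deg u = d}"
      then have "index_of u \<in> {q \<in> basis_index. deg (exponent q) = d}"
        by (simp add: index_of_in_basis_index exponent_index_of)
      then show "u \<in> exponent ` {q \<in> basis_index. deg (exponent q) = d}"
        by (rule image_eqI[where f = exponent, rotated]) (simp add: exponent_index_of)
    qed
  qed
  then show ?thesis
    by (rule bij_betw_subset[OF bij, rotated]) blast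
qed

end

lemma (in vector_space) in_span_imageE:
  assumes "p \<in> span (f ` X)"
  obtains G c where "finite G" "G \<subseteq> X" "p = (\<Sum>x\<in>G. scale (c x) (f x))"
proof -
  obtain t r where t: "finite t" "t \<subseteq> f ` X" "p = (\<Sum>b\<in>t. scale (r b) b)"
    using assms unfolding span_explicit by blast
  obtain G where G: "G \<subseteq> X" "inj_on f G" "t = f ` G"
    using t(2) unfolding subset_image_inj by blast
  have "finite G"
    using t(1) finite_image_iff[OF G(2)] G(3) by blast
  moreover have "p = (\<Sum>x\<in>G. scale (r (f x)) (f x))"
    unfolding t(3) G(3) using sum.reindex[OF G(2), of "\<lambda>b. scale (r b) b"] by simp
  ultimately show thesis
    using G(1) that by simp
qed

section \<open>Laurent polynomials as a vector space\<close>

lemma (in vector_space) span_subset_span_independent_card: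
  assumes T: "finite T" and B: "independent B" "B \<subseteq> span T" and card: "card T \<le> card B"
  shows "span T \<subseteq> span B"
proof -
  have "x \<in> span B" if x: "x \<in> T" for x
  proof (rule ccontr)
    assume x_B: "x \<notin> span B"
    then have "independent (insert x B)"
      using B(1) by (rule independent_insertI)
    moreover have "insert x B \<subseteq> span T"
      using B(2) x span_base by blast
    ultimately have "card (insert x B) \<le> card T"
      using T independent_span_bound by blast
    moreover have "finite B" "x \<notin> B"
      using T B independent_span_bound x_B span_base by blast+
    ultimately show False
      using card by simp
  qed
  then show ?thesis
    by (intro span_minimal) auto
qed

lemma const_l_add: "const_l (b + c) = const_l b + (const_l c :: 'n::finite laurent)"
  by (simp add: const_l_def single_add)

lemma const_l_mult: "const_l (b * c) = const_l b * (const_l c :: 'n::finite laurent)"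
  by (simp add: const_l_def mult_single)

lemma const_l_one: "const_l 1 = (1 :: 'n::finite laurent)"
  by (simp add: const_l_def)

lemma const_l_uminus: "const_l (- c) = - (const_l c :: 'n::finite laurent)"
  by (simp add: const_l_def single_uminus)

lemma const_l_diff: "const_l (b - c) = const_l b - (const_l c :: 'n::finite laurent)"
  by (simp add: const_l_def single_diff)

lemma const_l_zero: "const_l 0 = (0 :: 'n::finite laurent)"
  by (simp add: const_l_def)

lemma const_l_mult_monomial_x: "const_l c * x\<^bsup>u\<^esup> = Poly_Mapping.single u c"
  by (simp add: monomial_x_def const_l_def mult_single)

lemma monomial_x_mult: "x\<^bsup>u\<^esup> * x\<^bsup>v\<^esup> = x\<^bsup>u + v\<^esup>"
  by (simp add: monomial_x_def mult_single)

lemma monomial_x_zero: "x\<^bsup>0\<^esup> = (1 :: 'n::finite laurent)"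
  by (simp add: monomial_x_def)

lemma keys_monomial_x: "Poly_Mapping.keys (x\<^bsup>u\<^esup> :: 'n::finite laurent) = {u}"
  by (simp add: monomial_x_def)

lemma prod_monomial_x: "(\<Prod>j\<in>F. x\<^bsup>g j\<^esup>) = (x\<^bsup>\<Sum>j\<in>F. g j\<^esup> :: 'n::finite laurent)"
  by (induction F rule: infinite_finite_induct) (simp_all add: monomial_x_zero monomial_x_mult)

lemma monomial_x_power: "(x\<^bsup>u\<^esup>) ^ n = (x\<^bsup>int n *s u\<^esup> :: 'n::finite laurent)"
proof (induction n)
  case (Suc n)
  have "u + int n *s u = int (Suc n) *s u"
    by (simp add: vec_eq_iff algebra_simps)
  then show ?case
    using Suc by (simp add: monomial_x_mult)
qed (simp add: monomial_x_zero)

lemma monomial_x_coeffs_in_regular_at_0: "x\<^bsup>u\<^esup> \<in> coeffs_in regular_at_0"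
  unfolding monomial_x_def by (rule coeffs_in_single[OF zero_regular_at_0 one_regular_at_0])

lemma poly_mapping_sum_monomials:
  "(p :: 'n::finite laurent) = (\<Sum>w\<in>Poly_Mapping.keys p. const_l (Poly_Mapping.lookup p w) * x\<^bsup>w\<^esup>)"
  by (subst poly_mapping_sum_single_keys) (simp add: const_l_mult_monomial_x)

global_interpretation laurent_space: vector_space "\<lambda>c (p :: 'n::finite laurent). const_l c * p"
  by unfold_locales (simp_all add: const_l_add const_l_mult const_l_one distrib_left distrib_right mult.assoc)

lemma keys_subset_in_span_monomials:
  assumes "Poly_Mapping.keys (p :: 'n::finite laurent) \<subseteq> S"
  shows "p \<in> laurent_space.span (monomial_x ` S)"
proof -
  have "x\<^bsup>w\<^esup> \<in> laurent_space.span (monomial_x ` S)" if "w \<in> Poly_Mapping.keys p" for w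
    using assms that by (intro laurent_space.span_base) auto
  then show ?thesis
    by (subst poly_mapping_sum_monomials) (intro laurent_space.span_sum laurent_space.span_scale)
qed

context lattice_cone
begin

lemma zero_in_Sprime: "0 \<in> Sprime a m"
  by (simp add: Sprime_def)

lemma Sprime_add: "p \<in> Sprime a m \<Longrightarrow> q \<in> Sprime a m \<Longrightarrow> p + q \<in> Sprime a m"
  using keys_add[of p q] by (auto simp: Sprime_def)

lemma Sprime_mult: "p \<in> Sprime a m \<Longrightarrow> q \<in> Sprime a m \<Longrightarrow> p * q \<in> Sprime a m"
  using keys_mult[of p q] by (fastforce simp: Sprime_def intro: Mset_add)

lemma const_l_mult_in_Sprime: "p \<in> Sprime a m \<Longrightarrow> const_l c * p \<in> Sprime a m"
  using Sprime_mult[of "const_l c" p] zero_in_Mset by (simp add: Sprime_def const_l_def)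

lemma subspace_Sprime: "laurent_space.subspace (Sprime a m)"
  by (rule laurent_space.subspaceI) (simp_all add: zero_in_Sprime Sprime_add const_l_mult_in_Sprime)

end

section \<open>A basis of monomials times products of binomials\<close>

locale binomial_basis = lattice_cone a m for a :: "nat \<Rightarrow> int ^ 'n::finite" and m +
  assumes a0_in_Mset: "a 0 \<in> Mset a m"
    and deg_a0: "deg (a 0) = 1"
begin

definition toric_binomial :: "nat \<Rightarrow> 'n laurent" where
  "toric_binomial j = x\<^bsup>a j\<^esup> - const_l lam * x\<^bsup>a 0\<^esup>"

definition basis_elem :: "(int ^ 'n) \<times> (nat \<Rightarrow> nat) \<Rightarrow> 'n laurent" where
  "basis_elem q = x\<^bsup>fst q\<^esup> * (\<Prod>j=1..m. toric_binomial j ^ snd q j)"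

definition homogeneous :: "real \<Rightarrow> 'n laurent set" where
  "homogeneous d = {p. Poly_Mapping.keys p \<subseteq> {u \<in> Mset a m. deg u = d}}"

lemma homogeneous_mult: "p \<in> homogeneous d \<Longrightarrow> q \<in> homogeneous e \<Longrightarrow> p * q \<in> homogeneous (d + e)"
  using keys_mult[of p q] by (fastforce simp: homogeneous_def Mset_add deg_add)

lemma monomial_x_homogeneous: "u \<in> Mset a m \<Longrightarrow> x\<^bsup>u\<^esup> \<in> homogeneous (deg u)"
  by (simp add: homogeneous_def keys_monomial_x)

lemma one_homogeneous: "1 \<in> homogeneous 0"
  using monomial_x_homogeneous[OF zero_in_Mset] by (simp add: deg_zero monomial_x_zero)

lemma prod_homogeneous:
  "(\<And>j. j \<in> F \<Longrightarrow> f j \<in> homogeneous (d j)) \<Longrightarrow> prod f F \<in> homogeneous (\<Sum>j\<in>F. d j)"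
proof (induction F rule: infinite_finite_induct)
  case (insert j F)
  then show ?case
    using homogeneous_mult[of "f j" "d j" "prod f F"] by simp
qed (simp_all add: one_homogeneous)

lemma power_homogeneous: "p \<in> homogeneous d \<Longrightarrow> p ^ n \<in> homogeneous (n * d)"
  using prod_homogeneous[of "{..<n}" "\<lambda>_. p" "\<lambda>_. d"] by simp

lemma toric_binomial_homogeneous:
  assumes "j \<in> {1..m}"
  shows "toric_binomial j \<in> homogeneous 1"
proof -
  have "Poly_Mapping.keys (toric_binomial j) \<subseteq> {a j, a 0}"
    using keys_diff[of "x\<^bsup>a j\<^esup>" "const_l lam * x\<^bsup>a 0\<^esup>"]
    by (auto simp: toric_binomial_def const_l_mult_monomial_x keys_monomial_x split: if_splits)
  then show ?thesis
    using assms generator_in_Mset deg_generator a0_in_Mset deg_a0 by (auto simp: homogeneous_def)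
qed

lemma basis_elem_homogeneous:
  assumes "q \<in> basis_index"
  shows "basis_elem q \<in> homogeneous (deg (exponent q))"
proof -
  have "fst q \<in> Mset a m"
    using assms by (auto simp: basis_index_def parallelepiped_def Mset_iff)
  moreover have "(\<Prod>j=1..m. toric_binomial j ^ snd q j) \<in> homogeneous (\<Sum>j=1..m. real (snd q j))"
    using prod_homogeneous[of "{1..m}" "\<lambda>j. toric_binomial j ^ snd q j" "\<lambda>j. real (snd q j)"]
      power_homogeneous[OF toric_binomial_homogeneous] by simp
  ultimately show ?thesis
    unfolding basis_elem_def deg_exponent[OF assms]
    by (intro homogeneous_mult monomial_x_homogeneous)
qed

lemma toric_binomial_cong: "cong_mod_X (toric_binomial j) (x\<^bsup>a j\<^esup>)"
  unfolding toric_binomial_def const_l_mult_monomial_x lam_def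
  by (intro cong_mod_X_diff_vanishing monomial_x_coeffs_in_regular_at_0
      coeffs_in_single zero_vanishing_at_0 X_vanishing_at_0)

lemma basis_elem_cong: "cong_mod_X (basis_elem q) (x\<^bsup>exponent q\<^esup>)"
proof -
  have "cong_mod_X (basis_elem q) (x\<^bsup>fst q\<^esup> * (\<Prod>j=1..m. (x\<^bsup>a j\<^esup>) ^ snd q j))"
    unfolding basis_elem_def
    by (intro cong_mod_X_mult cong_mod_X_refl monomial_x_coeffs_in_regular_at_0
        cong_mod_X_prod cong_mod_X_power toric_binomial_cong)
  then show ?thesis
    by (simp add: monomial_x_power prod_monomial_x monomial_x_mult exponent_def)
qed

lemma lincomb_basis_elem_cong:
  assumes "\<And>q. q \<in> G \<Longrightarrow> c q \<in> regular_at_0"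
  shows "cong_mod_X (\<Sum>q\<in>G. const_l (c q) * basis_elem q) (\<Sum>q\<in>G. Poly_Mapping.single (exponent q) (c q))"
  unfolding const_l_mult_monomial_x[symmetric]
proof (rule cong_mod_X_sum)
  fix q
  assume "q \<in> G"
  then have "const_l (c q) \<in> coeffs_in regular_at_0"
    unfolding const_l_def using assms by (intro coeffs_in_single zero_regular_at_0)
  then show "cong_mod_X (const_l (c q) * basis_elem q) (const_l (c q) * x\<^bsup>exponent q\<^esup>)"
    by (intro cong_mod_X_mult cong_mod_X_refl basis_elem_cong)
qed

lemma basis_elem_lincomb_eq_0:
  assumes G: "finite G" "G \<subseteq> basis_index"
    and zero: "(\<Sum>q\<in>G. const_l (c q) * basis_elem q) = 0"
    and q: "q \<in> G"
  shows "c q = 0"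
proof (rule ccontr)
  assume "c q \<noteq> 0"
  then obtain s q0 where s: "\<And>q. q \<in> G \<Longrightarrow> s * c q \<in> regular_at_0"
    and q0: "q0 \<in> G" "s * c q0 \<notin> vanishing_at_0"
    using rescale_to_regular_with_unit[OF G(1), of c] q by blast
  have "(\<Sum>p\<in>G. const_l (s * c p) * basis_elem p) = const_l s * (\<Sum>p\<in>G. const_l (c p) * basis_elem p)"
    unfolding sum_distrib_left by (simp only: const_l_mult mult.assoc)
  then have sum_zero: "(\<Sum>p\<in>G. const_l (s * c p) * basis_elem p) = 0"
    by (simp add: zero)
  have "cong_mod_X 0 (\<Sum>p\<in>G. Poly_Mapping.single (exponent p) (s * c p))"
    using lincomb_basis_elem_cong[of G "\<lambda>p. s * c p"] s unfolding sum_zero by blast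
  then have "0 - (\<Sum>p\<in>G. Poly_Mapping.single (exponent p) (s * c p)) \<in> coeffs_in vanishing_at_0"
    unfolding cong_mod_X_def by blast
  then have "- Poly_Mapping.lookup (\<Sum>p\<in>G. Poly_Mapping.single (exponent p) (s * c p)) (exponent q0)
      \<in> vanishing_at_0"
    unfolding coeffs_in_def by (simp add: lookup_minus)
  moreover have "inj_on exponent G"
    using inj_on_exponent G(2) by (rule inj_on_subset)
  ultimately have "- (s * c q0) \<in> vanishing_at_0"
    using lookup_sum_single_inj[OF G(1) _ q0(1), of exponent "\<lambda>p. s * c p"] by simp
  then show False
    using vanishing_at_0_uminus q0(2) by force
qed

lemma inj_on_basis_elem: "inj_on basis_elem basis_index"
proof (rule inj_onI, rule ccontr)
  fix q q'
  assume q: "q \<in> basis_index" "q' \<in> basis_index" "basis_elem q = basis_elem q'" "q \<noteq> q'"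
  have "(\<Sum>p\<in>{q, q'}. const_l (if p = q then 1 else - 1) * basis_elem p) = 0"
    using q by (simp add: const_l_one const_l_uminus)
  then show False
    using basis_elem_lincomb_eq_0[of "{q, q'}" "\<lambda>p. if p = q then 1 else - 1" q] q by simp
qed

lemma independent_basis_elem: "laurent_space.independent (basis_elem ` basis_index)"
  unfolding laurent_space.independent_explicit_finite_subsets
proof (intro allI impI ballI)
  fix S u v
  assume S: "S \<subseteq> basis_elem ` basis_index" "finite S"
    and sum: "(\<Sum>v\<in>S. const_l (u v) * v) = 0" and v: "v \<in> S"
  obtain G where G: "G \<subseteq> basis_index" "S = basis_elem ` G"
    using S(1) by (auto simp: subset_image_iff)
  have inj: "inj_on basis_elem G"
    using inj_on_basis_elem G(1) by (rule inj_on_subset)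
  have "(\<Sum>q\<in>G. const_l (u (basis_elem q)) * basis_elem q) = 0"
    using sum G(2) inj by (simp add: sum.reindex)
  moreover have "finite G"
    using S(2) G(2) inj by (simp add: finite_image_iff)
  moreover obtain q where "q \<in> G" "v = basis_elem q"
    using v G(2) by blast
  ultimately show "u v = 0"
    using basis_elem_lincomb_eq_0[of G "\<lambda>q. u (basis_elem q)" q] G(1) by simp
qed

lemma monomial_x_in_span_basis_elem:
  assumes u: "u \<in> Mset a m"
  shows "x\<^bsup>u\<^esup> \<in> laurent_space.span (basis_elem ` basis_index)"
proof -
  define Md where "Md = {v \<in> Mset a m. deg v = deg u}"
  define Qd where "Qd = {q \<in> basis_index. deg (exponent q) = deg u}"
  have finite_Md: "finite Md"
    unfolding Md_def by (rule finite_Mset_deg)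
  have "bij_betw exponent Qd Md"
    unfolding Qd_def Md_def by (rule bij_betw_exponent_deg)
  then have card_Qd: "card Qd = card Md"
    by (rule bij_betw_same_card)
  have Qd: "Qd \<subseteq> basis_index"
    by (simp add: Qd_def)
  have "basis_elem q \<in> laurent_space.span (monomial_x ` Md)" if "q \<in> Qd" for q
    using that basis_elem_homogeneous[of q] keys_subset_in_span_monomials
    by (simp add: Qd_def Md_def homogeneous_def)
  then have "basis_elem ` Qd \<subseteq> laurent_space.span (monomial_x ` Md)"
    by blast
  moreover have "laurent_space.independent (basis_elem ` Qd)"
    using laurent_space.independent_mono[OF independent_basis_elem image_mono[OF Qd]] .
  moreover have "card (monomial_x ` Md) \<le> card (basis_elem ` Qd)"
    using card_image_le[OF finite_Md] card_image[OF inj_on_subset[OF inj_on_basis_elem Qd]] card_Qd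
    by simp
  ultimately have "laurent_space.span (monomial_x ` Md) \<subseteq> laurent_space.span (basis_elem ` Qd)"
    using finite_Md by (intro laurent_space.span_subset_span_independent_card) simp_all
  also have "\<dots> \<subseteq> laurent_space.span (basis_elem ` basis_index)"
    using Qd by (intro laurent_space.span_mono image_mono)
  finally show ?thesis
    using u by (auto simp: Md_def intro: laurent_space.span_base)
qed

lemma homogeneous_subset_Sprime: "homogeneous d \<subseteq> Sprime a m"
  by (auto simp: homogeneous_def Sprime_def)

lemma basis_elem_in_Sprime: "q \<in> basis_index \<Longrightarrow> basis_elem q \<in> Sprime a m"
  using basis_elem_homogeneous homogeneous_subset_Sprime by blast

lemma toric_binomial_in_Sprime: "j \<in> {1..m} \<Longrightarrow> toric_binomial j \<in> Sprime a m"
  using toric_binomial_homogeneous homogeneous_subset_Sprime by blast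

lemma Sprime_eq_span_basis_elem: "Sprime a m = laurent_space.span (basis_elem ` basis_index)"
proof
  have "monomial_x ` Mset a m \<subseteq> laurent_space.span (basis_elem ` basis_index)"
    using monomial_x_in_span_basis_elem by blast
  then have "laurent_space.span (monomial_x ` Mset a m) \<subseteq> laurent_space.span (basis_elem ` basis_index)"
    by (rule laurent_space.span_minimal) simp
  then show "Sprime a m \<subseteq> laurent_space.span (basis_elem ` basis_index)"
    using keys_subset_in_span_monomials by (auto simp: Sprime_def)
  have "basis_elem ` basis_index \<subseteq> Sprime a m"
    using basis_elem_in_Sprime by blast
  then show "laurent_space.span (basis_elem ` basis_index) \<subseteq> Sprime a m"
    using subspace_Sprime by (rule laurent_space.span_minimal)
qed

end

section \<open>The ideals generated by the first binomials\<close>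

lemma ideal_in_take_map_upt:
  assumes "i \<le> m"
  shows "ideal_in R (take i (map f [1..<m+1])) = {\<Sum>k<i. g k * f (Suc k) | g. \<forall>k. g k \<in> R}"
proof -
  have "take i (map f [1..<m+1]) ! k = f (Suc k)" if "k < i" for k
    using that assms by (simp del: upt_Suc)
  then have "(\<Sum>k<i. g k * take i (map f [1..<m+1]) ! k) = (\<Sum>k<i. g k * f (Suc k))" for g
    by (intro sum.cong) simp_all
  moreover have "length (take i (map f [1..<m+1])) = i"
    using assms by (simp del: upt_Suc)
  ultimately show ?thesis
    unfolding ideal_in_def by simp
qed

lemma zero_in_ideal_in: "0 \<in> R \<Longrightarrow> 0 \<in> ideal_in R fs"
  unfolding ideal_in_def by (intro CollectI exI[of _ "\<lambda>_. 0"]) simp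

lemma ideal_in_add:
  assumes "\<And>x y. x \<in> R \<Longrightarrow> y \<in> R \<Longrightarrow> x + y \<in> R" "p \<in> ideal_in R fs" "q \<in> ideal_in R fs"
  shows "p + q \<in> ideal_in R fs"
proof -
  obtain g h where "\<forall>i. g i \<in> R" "p = (\<Sum>i<length fs. g i * fs ! i)"
    "\<forall>i. h i \<in> R" "q = (\<Sum>i<length fs. h i * fs ! i)"
    using assms(2,3) unfolding ideal_in_def by blast
  then show ?thesis
    unfolding ideal_in_def using assms(1)
    by (intro CollectI exI[of _ "\<lambda>i. g i + h i"]) (simp add: sum.distrib distrib_right)
qed

lemma ideal_in_mult_left:
  assumes "\<And>x. x \<in> R \<Longrightarrow> r * x \<in> R" "p \<in> ideal_in R fs"
  shows "r * p \<in> ideal_in R fs"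
proof -
  obtain g where "\<forall>i. g i \<in> R" "p = (\<Sum>i<length fs. g i * fs ! i)"
    using assms(2) unfolding ideal_in_def by blast
  then show ?thesis
    unfolding ideal_in_def using assms(1)
    by (intro CollectI exI[of _ "\<lambda>i. r * g i"]) (simp add: sum_distrib_left mult.assoc)
qed

context binomial_basis
begin

definition shift :: "nat \<Rightarrow> (int ^ 'n) \<times> (nat \<Rightarrow> nat) \<Rightarrow> (int ^ 'n) \<times> (nat \<Rightarrow> nat)" where
  "shift k q = (fst q, (snd q)(k := Suc (snd q k)))"

lemma shift_in_basis_index: "k \<in> {1..m} \<Longrightarrow> q \<in> basis_index \<Longrightarrow> shift k q \<in> basis_index"
  by (auto simp: shift_def basis_index_def)

lemma inj_shift: "inj (shift k)"
proof (rule injI)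
  fix q q'
  assume "shift k q = shift k q'"
  then have "fst q = fst q'" "(snd q)(k := Suc (snd q k)) = (snd q')(k := Suc (snd q' k))"
    by (simp_all add: shift_def)
  moreover have "snd q j = snd q' j" for j
    using fun_cong[OF calculation(2), of j] by (cases "j = k") simp_all
  ultimately show "q = q'"
    by (simp add: prod_eq_iff fun_eq_iff)
qed

lemma basis_elem_shift:
  assumes k: "k \<in> {1..m}"
  shows "basis_elem (shift k q) = basis_elem q * toric_binomial k"
proof -
  have other: "(\<Prod>j\<in>{1..m} - {k}. toric_binomial j ^ snd (shift k q) j) =
      (\<Prod>j\<in>{1..m} - {k}. toric_binomial j ^ snd q j)"
    by (intro prod.cong) (auto simp: shift_def)
  have "(\<Prod>j=1..m. toric_binomial j ^ snd (shift k q) j) =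
      toric_binomial k ^ Suc (snd q k) * (\<Prod>j\<in>{1..m} - {k}. toric_binomial j ^ snd q j)"
    using k by (simp add: prod.remove other del: One_nat_def) (simp add: shift_def)
  also have "\<dots> = toric_binomial k * (\<Prod>j=1..m. toric_binomial j ^ snd q j)"
    using k by (simp add: prod.remove mult.assoc del: One_nat_def)
  finally show ?thesis
    by (simp add: basis_elem_def ac_simps) (simp add: shift_def)
qed

lemma lincomb_basis_elem_mult_toric_binomial:
  assumes "k \<in> {1..m}"
  shows "(\<Sum>q\<in>G. const_l (c q) * basis_elem q) * toric_binomial k =
    (\<Sum>q\<in>G. const_l (c q) * basis_elem (shift k q))"
  by (simp add: sum_distrib_right basis_elem_shift[OF assms] mult.assoc)

definition divisible_index :: "nat \<Rightarrow> ((int ^ 'n) \<times> (nat \<Rightarrow> nat)) set" where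
  "divisible_index i = {q \<in> basis_index. \<exists>j\<in>{1..i}. 0 < snd q j}"

lemma divisible_index_subset: "divisible_index i \<subseteq> basis_index"
  by (auto simp: divisible_index_def)

lemma shift_in_divisible_index:
  "k \<in> {1..i} \<Longrightarrow> i \<le> m \<Longrightarrow> q \<in> basis_index \<Longrightarrow> shift k q \<in> divisible_index i"
  using shift_in_basis_index[of k q] by (auto simp: divisible_index_def shift_def)

lemma shift_notin_divisible_index:
  "q \<notin> divisible_index i \<Longrightarrow> q \<in> basis_index \<Longrightarrow> shift (Suc i) q \<notin> divisible_index i"
  by (auto simp: divisible_index_def shift_def)

lemma divisible_index_eq_shift:
  assumes "q \<in> divisible_index i"
  obtains j q' where "j \<in> {1..i}" "q' \<in> basis_index" "q = shift j q'"
proof -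
  obtain r \<alpha> where q: "q = (r, \<alpha>)"
    by (cases q)
  obtain j where "(r, \<alpha>) \<in> basis_index" "j \<in> {1..i}" "0 < \<alpha> j"
    using assms by (auto simp: divisible_index_def q)
  then have "(r, \<alpha>(j := \<alpha> j - 1)) \<in> basis_index" "q = shift j (r, \<alpha>(j := \<alpha> j - 1))"
    by (auto simp: basis_index_def shift_def q)
  then show thesis
    using that \<open>j \<in> {1..i}\<close> by blast
qed

lemma lincomb_basis_elem_in_span_coeff:
  assumes G: "finite G" "G \<subseteq> basis_index" and X: "X \<subseteq> basis_index"
    and span: "(\<Sum>q\<in>G. const_l (c q) * basis_elem q) \<in> laurent_space.span (basis_elem ` X)"
    and q: "q \<in> G" "q \<notin> X"
  shows "c q = 0"
proof -
  obtain H d where H: "finite H" "H \<subseteq> X"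
    and eq: "(\<Sum>q\<in>G. const_l (c q) * basis_elem q) = (\<Sum>q\<in>H. const_l (d q) * basis_elem q)"
    using span by (rule laurent_space.in_span_imageE)
  define e where "e p = (if p \<in> G then c p else 0) - (if p \<in> H then d p else 0)" for p
  have restrict: "(\<Sum>p\<in>G \<union> H. const_l (if p \<in> A then f p else 0) * basis_elem p) =
      (\<Sum>p\<in>A. const_l (f p) * basis_elem p)" if "A \<subseteq> G \<union> H" for A f
    using that G(1) H(1)
    by (subst sum.mono_neutral_right[of "G \<union> H" A]) (auto simp: const_l_zero intro!: sum.cong)
  have "(\<Sum>p\<in>G \<union> H. const_l (e p) * basis_elem p) = 0"
    unfolding e_def const_l_diff left_diff_distrib sum_subtractf using restrict eq by simp
  then have "e q = 0"
    using G H X q by (intro basis_elem_lincomb_eq_0[of "G \<union> H" e q]) auto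
  then show ?thesis
    using q H(2) by (auto simp: e_def)
qed

lemma lincomb_toric_binomials_in_span:
  assumes "\<forall>k. g k \<in> Sprime a m" "i \<le> m"
  shows "(\<Sum>k<i. g k * toric_binomial (Suc k)) \<in> laurent_space.span (basis_elem ` divisible_index i)"
proof (intro laurent_space.span_sum)
  fix k
  assume k: "k \<in> {..<i}"
  have "g k \<in> laurent_space.span (basis_elem ` basis_index)"
    using assms(1) Sprime_eq_span_basis_elem by blast
  then obtain G c where G: "finite G" "G \<subseteq> basis_index" "g k = (\<Sum>q\<in>G. const_l (c q) * basis_elem q)"
    by (rule laurent_space.in_span_imageE)
  have "Suc k \<in> {1..m}" "Suc k \<in> {1..i}"
    using k assms(2) by auto
  then show "g k * toric_binomial (Suc k) \<in> laurent_space.span (basis_elem ` divisible_index i)"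
    unfolding G(3) lincomb_basis_elem_mult_toric_binomial[OF \<open>Suc k \<in> {1..m}\<close>]
    using G(2) assms(2) shift_in_divisible_index
    by (intro laurent_space.span_sum laurent_space.span_scale laurent_space.span_base) blast
qed

lemma ideal_in_eq_span_divisible_index:
  assumes "i \<le> m"
  shows "ideal_in (Sprime a m) (take i (map toric_binomial [1..<m+1])) =
    laurent_space.span (basis_elem ` divisible_index i)"
    (is "?I = ?S")
proof
  have I: "?I = {\<Sum>k<i. g k * toric_binomial (Suc k) | g. \<forall>k. g k \<in> Sprime a m}"
    by (rule ideal_in_take_map_upt[OF assms])
  show "?I \<subseteq> ?S"
    unfolding I using lincomb_toric_binomials_in_span assms by blast
  have "basis_elem ` divisible_index i \<subseteq> ?I"
  proof
    fix p
    assume "p \<in> basis_elem ` divisible_index i"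
    then obtain q' where "q' \<in> divisible_index i" "p = basis_elem q'"
      by blast
    then obtain j q where j: "j \<in> {1..i}" and q: "q \<in> basis_index" and p: "p = basis_elem (shift j q)"
      by (metis divisible_index_eq_shift)
    define g where "g k = (if k = j - 1 then basis_elem q else 0)" for k
    have "p = (\<Sum>k<i. g k * toric_binomial (Suc k))"
      using j assms by (auto simp: p basis_elem_shift g_def if_distrib[of "\<lambda>x. x * _"] cong: if_cong)
    moreover have "\<forall>k. g k \<in> Sprime a m"
      by (simp add: g_def basis_elem_in_Sprime[OF q] zero_in_Sprime)
    ultimately show "p \<in> ?I"
      unfolding I by blast
  qed
  moreover have "laurent_space.subspace ?I"
  proof (rule laurent_space.subspaceI)
    show "0 \<in> ?I"
      using zero_in_Sprime by (rule zero_in_ideal_in)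
    show "p + p' \<in> ?I" if "p \<in> ?I" "p' \<in> ?I" for p p'
      using Sprime_add that by (rule ideal_in_add)
    show "const_l c * p \<in> ?I" if "p \<in> ?I" for c p
      using const_l_mult_in_Sprime that by (rule ideal_in_mult_left)
  qed
  ultimately show "?S \<subseteq> ?I"
    by (rule laurent_space.span_minimal)
qed

lemma toric_binomial_nonzerodivisor:
  assumes i: "i < m" and g: "g \<in> Sprime a m"
    and mult: "g * toric_binomial (Suc i) \<in> laurent_space.span (basis_elem ` divisible_index i)"
  shows "g \<in> laurent_space.span (basis_elem ` divisible_index i)"
proof -
  have "g \<in> laurent_space.span (basis_elem ` basis_index)"
    using g Sprime_eq_span_basis_elem by blast
  then obtain G c where G: "finite G" "G \<subseteq> basis_index" and g_eq: "g = (\<Sum>q\<in>G. const_l (c q) * basis_elem q)"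
    by (rule laurent_space.in_span_imageE)
  have k: "Suc i \<in> {1..m}"
    using i by simp
  have inj: "inj_on (shift (Suc i)) G"
    using inj_shift by (rule inj_on_subset) simp
  have "g * toric_binomial (Suc i) =
      (\<Sum>q\<in>shift (Suc i) ` G. const_l (c (inv_into G (shift (Suc i)) q)) * basis_elem q)"
    unfolding g_eq lincomb_basis_elem_mult_toric_binomial[OF k] sum.reindex[OF inj]
    by (simp add: inv_into_f_f[OF inj])
  with mult have mult': "(\<Sum>q\<in>shift (Suc i) ` G. const_l (c (inv_into G (shift (Suc i)) q)) * basis_elem q)
      \<in> laurent_space.span (basis_elem ` divisible_index i)"
    by simp
  have shift_G: "shift (Suc i) ` G \<subseteq> basis_index"
    using G(2) shift_in_basis_index[OF k] by blast
  have "c q = 0" if q: "q \<in> G" "q \<notin> divisible_index i" for q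
  proof -
    have "shift (Suc i) q \<in> shift (Suc i) ` G" "shift (Suc i) q \<notin> divisible_index i"
      using q G(2) shift_notin_divisible_index[of q i] by auto
    from lincomb_basis_elem_in_span_coeff[OF finite_imageI[OF G(1)] shift_G divisible_index_subset mult' this]
    show ?thesis
      by (simp add: inv_into_f_f[OF inj q(1)])
  qed
  then have "g = (\<Sum>q\<in>G \<inter> divisible_index i. const_l (c q) * basis_elem q)"
    unfolding g_eq using G(1) by (intro sum.mono_neutral_right) (auto simp: const_l_zero)
  also have "\<dots> \<in> laurent_space.span (basis_elem ` divisible_index i)"
    by (intro laurent_space.span_sum laurent_space.span_scale laurent_space.span_base) blast
  finally show ?thesis .
qed

lemma one_notin_span_divisible_index: "1 \<notin> laurent_space.span (basis_elem ` divisible_index i)"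
proof
  assume one: "1 \<in> laurent_space.span (basis_elem ` divisible_index i)"
  define q0 :: "(int ^ 'n) \<times> (nat \<Rightarrow> nat)" where "q0 = (0, \<lambda>_. 0)"
  have q0: "q0 \<in> basis_index" "q0 \<notin> divisible_index i"
    by (simp_all add: q0_def basis_index_def parallelepiped_def divisible_index_def
        rvec_zero coord_zero span_zero)
  have "(\<Sum>q\<in>{q0}. const_l 1 * basis_elem q) = 1"
    by (simp add: q0_def basis_elem_def const_l_one monomial_x_zero)
  then have "(\<Sum>q\<in>{q0}. const_l 1 * basis_elem q) \<in> laurent_space.span (basis_elem ` divisible_index i)"
    using one by (simp add: const_l_one)
  from lincomb_basis_elem_in_span_coeff[OF _ _ divisible_index_subset this] q0
  show False
    by simp
qed

theorem regular_seq_toric_binomials: "regular_seq_on (Sprime a m) (map toric_binomial [1..<m+1])"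
  unfolding regular_seq_on_def
proof (intro conjI allI impI ballI)
  show "set (map toric_binomial [1..<m+1]) \<subseteq> Sprime a m"
    using toric_binomial_in_Sprime by auto
next
  fix i g
  assume "i < length (map toric_binomial [1..<m+1])" and g: "g \<in> Sprime a m"
    and mult: "g * map toric_binomial [1..<m+1] ! i \<in> ideal_in (Sprime a m) (take i (map toric_binomial [1..<m+1]))"
  then have i: "i < m"
    by (simp del: upt_Suc)
  have ideal: "ideal_in (Sprime a m) (take i (map toric_binomial [1..<m+1])) =
      laurent_space.span (basis_elem ` divisible_index i)"
    using i by (intro ideal_in_eq_span_divisible_index) simp
  have "map toric_binomial [1..<m+1] ! i = toric_binomial (Suc i)"
    using i by (simp del: upt_Suc)
  with mult have "g * toric_binomial (Suc i) \<in> laurent_space.span (basis_elem ` divisible_index i)"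
    unfolding ideal by simp
  then show "g \<in> ideal_in (Sprime a m) (take i (map toric_binomial [1..<m+1]))"
    unfolding ideal by (rule toric_binomial_nonzerodivisor[OF i g])
next
  have "map toric_binomial [1..<m+1] = take m (map toric_binomial [1..<m+1])"
    by simp
  then show "1 \<notin> ideal_in (Sprime a m) (map toric_binomial [1..<m+1])"
    using one_notin_span_divisible_index[of m] ideal_in_eq_span_divisible_index[of m] by simp
qed

end

theorem proposition5p19:
  fixes a :: "nat \<Rightarrow> int ^ 'n" and l :: "nat \<Rightarrow> nat" and m :: nat
  assumes indep: "independent (rvec ` a ` {1..m})"
    and inj: "inj_on (\<lambda>j. rvec (a j)) {1..m}"
    and pos: "\<forall>j\<in>{0..m}. 0 < l j"
    and gcd: "Gcd (l ` {0..m}) = 1"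
    and rel: "of_nat (l 0) *s a 0 = (\<Sum>j=1..m. of_nat (l j) *s a j)"
    and sum: "l 0 = (\<Sum>j=1..m. l j)"
  shows "regular_seq_on (Sprime a m)
           (map (\<lambda>j. x\<^bsup>a j\<^esup> - const_l lam * x\<^bsup>a 0\<^esup>) [1..<m+1])"
proof -
  \<comment> \<open>Neither \<open>gcd\<close> nor the positivity of \<open>l 1, ..., l m\<close> is needed.\<close>
  interpret lattice_cone a m
    using indep inj by unfold_locales
  have l0: "0 < l 0"
    using pos by simp
  have "deg (a 0) = real (\<Sum>j=1..m. l j) / real (l 0)"
    using weighted_apex_in_Mset(2)[OF l0 rel] by simp
  also have "\<dots> = 1"
    unfolding sum[symmetric] using l0 by simp
  finally interpret binomial_basis a m
    using weighted_apex_in_Mset(1)[OF l0 rel] by unfold_locales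
  have "(\<lambda>j. x\<^bsup>a j\<^esup> - const_l lam * x\<^bsup>a 0\<^esup>) = toric_binomial"
    by (simp add: fun_eq_iff toric_binomial_def)
  then show ?thesis
    using regular_seq_toric_binomials by simp
qed

end
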